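(* Let $\mathcal{F}$ be a representable flag matroid on $[n]$. Then the associated polymatroid $\mathcal{M}(\mathcal{F})$ is a representable polymatroid.
   Context: For a $k$-dimensional subspace $V\subseteq\mathbb{C}^n$, choose a $k\times n$ matrix whose rows span $V$; the matroid $M_V$ on $[n]$ has as bases the $k$-subsets of columns with nonzero maximal minor. A flag matroid of rank $\mathbf{k}=(k_1\le\dots\le k_s)$ on $[n]$ is a collection of set-theoretic flags $F^1\subseteq\dots\subseteq F^s$ with $|F^i|=k_i$; it is representable if there is a flag of subspaces $V_1\subseteq\dots\subseteq V_s\subsetneq\mathbb{C}^n$, $\dim V_i=k_i$, such that $\mathcal{F}$ consists exactly of the flags $B_1\subseteq\dots\subseteq B_s$ with each $B_i$ a basis of $M_{V_i}$. The base polytope of $\mathcal{F}$ is $P(\mathcal{F})=\mathrm{conv}\{\sum_i\mathbf{e}_{F^i}:F\in\mathcal{F}\}$, with $\mathbf{e}_B$ the indicator vector of $B$. A polymatroid on $E$ is given by a rank function $r:\mathcal{P}(E)\to\mathbb{Z}_{\ge0}$, $r(\emptyset)=0$, monotone and submodular; its base polytope is $\{x\in\mathbb{R}^E_{\ge0}:x\cdot\mathbf{e}_U\le r(U)\ \forall U,\ x\cdot\mathbf{e}_E=r(E)\}$, and a polymatroid is determined by its base polytope. The polytope $P(\mathcal{F})$ is the base polytope of a polymatroid; this polymatroid is denoted $\mathcal{M}(\mathcal{F})$. A polymatroid on $E$ is representable if there is a vector space $V$ and a map $\phi$ from $E$ to the set of subspaces of $V$ such that $r(A)=\dim\sum_{a\in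 A}\phi(a)$ for all $A\subseteq E$. *)

theory Defs
  imports "HOL-Analysis.Analysis" "HOL-Library.Function_Algebras"
begin

text \<open>The ground set [n] is the finite type 'n (i.e. UNIV :: 'n set); C^n is complex ^ 'n.\<close>

definition det_nat :: "nat \<Rightarrow> (nat \<Rightarrow> nat \<Rightarrow> complex) \<Rightarrow> complex" where
  "det_nat k M = (\<Sum>p\<in>{p. p permutes {..<k}}. of_int (sign p) * (\<Prod>i<k. M i (p i)))"

text \<open>B is a basis of the matroid M_V: for a k x n matrix whose rows a 0, ..., a (k-1) span V
  (k = dim V), the maximal minor on the columns B (listed via a bijection e) is nonzero.\<close>
definition MV_basis :: "(complex ^ 'n) set \<Rightarrow> 'n set \<Rightarrow> bool" where
  "MV_basis V B \<longleftrightarrow>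
     (let k = vec.dim V in
      \<exists>(a :: nat \<Rightarrow> complex ^ 'n) (e :: nat \<Rightarrow> 'n).
         vec.span (a ` {..<k}) = V \<and> bij_betw e {..<k} B \<and>
         det_nat k (\<lambda>i j. a i $ e j) \<noteq> 0)"

text \<open>A flag matroid of rank ks = (k_1 \<le> ... \<le> k_s) is a set of set-theoretic flags, each
  given as a list of subsets of [n] of length s.\<close>
definition representable_flag_matroid :: "nat list \<Rightarrow> ('n::finite set list) set \<Rightarrow> bool" where
  "representable_flag_matroid ks FF \<longleftrightarrow>
     sorted ks \<and>
     (\<exists>Vs :: (complex ^ 'n) set list.
        length Vs = length ks \<and>
        (\<forall>i<length Vs. vec.subspace (Vs ! i) \<and> vec.dim (Vs ! i) = ks ! i \<and> Vs ! i \<noteq> UNIV) \<and>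
        (\<forall>i. Suc i < length Vs \<longrightarrow> Vs ! i \<subseteq> Vs ! Suc i) \<and>
        FF = {Bs. length Bs = length ks \<and>
                  (\<forall>i. Suc i < length Bs \<longrightarrow> Bs ! i \<subseteq> Bs ! Suc i) \<and>
                  (\<forall>i<length Bs. MV_basis (Vs ! i) (Bs ! i))})"

definition indic_vec :: "'n::finite set \<Rightarrow> real ^ 'n" where
  "indic_vec B = (\<chi> i. if i \<in> B then 1 else 0)"

definition flag_base_polytope :: "('n::finite set list) set \<Rightarrow> (real ^ 'n) set" where
  "flag_base_polytope FF = convex hull {sum_list (map indic_vec F) | F. F \<in> FF}"

definition polymatroid :: "('n::finite set \<Rightarrow> nat) \<Rightarrow> bool" where
  "polymatroid r \<longleftrightarrow> r {} = 0 \<and> (\<forall>A B. A \<subseteq> B \<longrightarrow> r A \<le> r B) \<and>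
     (\<forall>A B. r (A \<union> B) + r (A \<inter> B) \<le> r A + r B)"

definition polymatroid_base_polytope :: "('n::finite set \<Rightarrow> nat) \<Rightarrow> (real ^ 'n) set" where
  "polymatroid_base_polytope r =
     {x. (\<forall>i. x $ i \<ge> 0) \<and> (\<forall>U. x \<bullet> indic_vec U \<le> real (r U)) \<and>
         x \<bullet> indic_vec UNIV = real (r UNIV)}"

text \<open>Representing vector space: complex vector space nat \<Rightarrow> complex (pointwise operations);
  every finite-dimensional complex vector space embeds into it.\<close>
definition fscale :: "complex \<Rightarrow> (nat \<Rightarrow> complex) \<Rightarrow> (nat \<Rightarrow> complex)" where
  "fscale c f = (\<lambda>i. c * f i)"

interpretation fvec: vector_space fscale
  by unfold_locales (auto simp: fscale_def fun_eq_iff algebra_simps)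

definition representable_polymatroid :: "('n::finite set \<Rightarrow> nat) \<Rightarrow> bool" where
  "representable_polymatroid r \<longleftrightarrow>
     (\<exists>\<phi> :: 'n \<Rightarrow> (nat \<Rightarrow> complex) set.
        (\<forall>a. fvec.subspace (\<phi> a) \<and> (\<exists>S. finite S \<and> \<phi> a = fvec.span S)) \<and>
        (\<forall>A. r A = fvec.dim (fvec.span (\<Union>a\<in>A. \<phi> a))))"

end

(* For a flag V_1 <= ... <= V_s of subspaces, the rank function of M(F) is
   U |-> sum_i (dim V_i - dim (V_i \<inter> {x. x_U = 0})), the sum of the rank functions of the
   matroids M_{V_i}.  Indeed, for an injective order f with U as initial segment, the functional
   x |-> x . e_U is maximised over the flag polytope by the flag of f-lexicographically first bases,
   with this value, and over the polymatroid base polytope by Edmonds' greedy vertex, with value r U;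
   equality of the polytopes gives equality of the ranks.  The rank function of M_V is represented
   by the columns of any matrix whose rows span V, and a sum of representable polymatroids is
   represented by direct sums of the representing subspaces, realised inside nat => complex by
   interleaving even and odd coordinates. *)

theory Submission
  imports Defs "Jordan_Normal_Form.Determinant"
begin

lemma det_nat_neq_0_iff:
  "det_nat k M \<noteq> 0 \<longleftrightarrow> (\<forall>d. (\<forall>j<k. (\<Sum>i<k. M i j * d i) = 0) \<longrightarrow> (\<forall>i<k. d i = 0))"
proof -
  define A where "A = transpose_mat (Matrix.mat k k (\<lambda>(i, j). M i j))"
  have A: "A \<in> carrier_mat k k" unfolding A_def by simp
  have det: "det_nat k M = Determinant.det A"
    unfolding A_def
    by (subst det_transpose[of _ k]) (simp_all add: det_nat_def Determinant.det_def lessThan_atLeast0)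
  have mult: "A *\<^sub>v Matrix.vec k d = Matrix.vec k (\<lambda>j. \<Sum>i<k. M i j * d i)" for d
    by (rule eq_vecI) (auto simp: A_def scalar_prod_def lessThan_atLeast0 intro!: sum.cong)
  have zero: "Matrix.vec k d = 0\<^sub>v k \<longleftrightarrow> (\<forall>i<k. d i = 0)" for d :: "nat \<Rightarrow> complex"
    by (auto simp: Matrix.vec_eq_iff)
  have "Determinant.det A = 0 \<longleftrightarrow>
      (\<exists>d. Matrix.vec k d \<noteq> 0\<^sub>v k \<and> A *\<^sub>v Matrix.vec k d = 0\<^sub>v k)"
    unfolding det_0_iff_vec_prod_zero_field[OF A]
  proof safe
    fix v assume "v \<in> carrier_vec k" "v \<noteq> 0\<^sub>v k" "A *\<^sub>v v = 0\<^sub>v k"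
    moreover have "v = Matrix.vec k (vec_index v)"
      using \<open>v \<in> carrier_vec k\<close> by (auto simp: Matrix.vec_eq_iff)
    ultimately show "\<exists>d. Matrix.vec k d \<noteq> 0\<^sub>v k \<and> A *\<^sub>v Matrix.vec k d = 0\<^sub>v k"
      by metis
  qed (blast intro: vec_carrier)
  then show ?thesis
    unfolding det mult zero by blast
qed

no_notation Matrix.vec_index (infixl "$" 100)
no_notation Matrix.scalar_prod (infix "\<bullet>" 70)
hide_const (open) Matrix.row Matrix.rows

section \<open>Linear algebra over a field\<close>

lemma span_image_eq_range_sum:
  fixes f :: "'i \<Rightarrow> 'a::field^'n"
  assumes "finite I"
  shows "vec.span (f ` I) = range (\<lambda>c. \<Sum>i\<in>I. c i *s f i)"
proof
  show "range (\<lambda>c. \<Sum>i\<in>I. c i *s f i) \<subseteq> vec.span (f ` I)"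
    by (auto intro!: vec.span_sum vec.span_scale vec.span_base[OF imageI])
  show "vec.span (f ` I) \<subseteq> range (\<lambda>c. \<Sum>i\<in>I. c i *s f i)"
  proof
    fix v assume "v \<in> vec.span (f ` I)"
    then show "v \<in> range (\<lambda>c. \<Sum>i\<in>I. c i *s f i)"
    proof (induction rule: vec.span_induct_alt)
      case base
      show ?case by (rule range_eqI[where x="\<lambda>_. 0"]) simp
    next
      case (step k x y)
      obtain j c where j: "j \<in> I" "x = f j" and y: "y = (\<Sum>i\<in>I. c i *s f i)"
        using step by auto
      have "(\<Sum>i\<in>I. (if i = j then k else 0) *s f i) = (\<Sum>i\<in>I. if i = j then k *s f i else 0)"
        by (rule sum.cong) auto
      also have "\<dots> = k *s x"
        using assms j by simp
      finally have "k *s x + y = (\<Sum>i\<in>I. (c i + (if i = j then k else 0)) *s f i)"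
        using y by (simp add: vector_sadd_rdistrib sum.distrib add.commute)
      then show ?case
        by (rule range_eqI[where x = "\<lambda>i. c i + (if i = j then k else 0)"])
    qed
  qed
qed

lemma span_rows: "vec.span (rows R) = range (\<lambda>c. \<Sum>t\<in>UNIV. c t *s row t R)"
  unfolding Finite_Cartesian_Product.rows_def Setcompr_eq_image
  by (rule span_image_eq_range_sum) simp

lemma in_span_iff_annihilated:
  fixes x :: "'a::field^'m"
  shows "x \<in> vec.span S \<longleftrightarrow> (\<forall>M::'a^'m^'m. (\<forall>y\<in>S. M *v y = 0) \<longrightarrow> M *v x = 0)"
proof safe
  fix M :: "'a^'m^'m"
  assume "x \<in> vec.span S" "\<forall>y\<in>S. M *v y = 0"
  then show "M *v x = 0"
    using vec.linear_eq_0_on_span[OF matrix_vector_mul_linear_gen] by blast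
next
  assume annihilated: "\<forall>M::'a^'m^'m. (\<forall>y\<in>S. M *v y = 0) \<longrightarrow> M *v x = 0"
  show "x \<in> vec.span S"
  proof (rule ccontr)
    assume x: "x \<notin> vec.span S"
    obtain B where B: "B \<subseteq> S" "vec.independent B" "S \<subseteq> vec.span B" "card B = vec.dim S"
      by (rule vec.basis_exists)
    have "x \<notin> vec.span B"
      using x vec.span_mono[OF B(1)] by blast
    then have "vec.independent (insert x B)"
      using B(2) by (rule vec.independent_insertI)
    then obtain g where g: "Vector_Spaces.linear (*s) (*s) g"
      and g_insert: "\<forall>y\<in>insert x B. g y = (if y = x then x else 0)"
      using vec.linear_independent_extend[of "insert x B" "\<lambda>y. if y = x then x else 0"] by blast
    have "g y = 0" if "y \<in> B" for y
    proof -
      have "y \<noteq> x"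
        using that \<open>x \<notin> vec.span B\<close> vec.span_base by blast
      then show ?thesis
        using that g_insert by simp
    qed
    then have "g y = 0" if "y \<in> S" for y
      using vec.linear_eq_0_on_span[OF g] B(3) that by blast
    then have "\<forall>y\<in>S. matrix g *v y = 0"
      by (simp add: matrix_works[OF g])
    then have "matrix g *v x = 0"
      using annihilated by blast
    moreover have "matrix g *v x = x"
      using g_insert matrix_works[OF g] by simp
    ultimately show False
      using x vec.span_zero[of S] by simp
  qed
qed

lemma (in vector_space) dim_insert_of_finite:
  assumes "finite S"
  shows "dim (insert x S) = (if x \<in> span S then dim S else Suc (dim S))"
proof (cases "x \<in> span S")
  case True
  then show ?thesis by (metis dim_span span_redundant)
next
  case False
  obtain B where B: "B \<subseteq> S" "independent B" "S \<subseteq> span B" "card B = dim S"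
    using basis_exists by blast
  have x: "x \<notin> span B"
    using False B(1) span_mono by blast
  have "card (insert x B) = dim (insert x S)"
  proof (rule basis_card_eq_dim)
    show "insert x B \<subseteq> insert x S" using B(1) by blast
    show "insert x S \<subseteq> span (insert x B)"
      using B(3) span_mono[of B "insert x B"] by (auto intro: span_base)
    show "independent (insert x B)" using x B(2) by (rule independent_insertI)
  qed
  moreover have "finite B" "x \<notin> B"
    using B(1) assms x finite_subset span_base by blast+
  ultimately show ?thesis using False B(4) by simp
qed

lemma (in vector_space) dim_Un_eq_add:
  assumes "finite X" "finite Y" and "span X \<inter> span Y \<subseteq> {0}"
  shows "dim (X \<union> Y) = dim X + dim Y"
  using assms(2,3)
proof (induction Y rule: finite_induct)
  case empty
  show ?case using dim_eq_card_independent[OF independent_empty] by simp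
next
  case (insert y Y)
  have "span X \<inter> span Y \<subseteq> {0}"
    using insert.prems span_mono[of Y "insert y Y"] by blast
  then have IH: "dim (X \<union> Y) = dim X + dim Y"
    by (rule insert.IH)
  have "y \<in> span (X \<union> Y) \<longleftrightarrow> y \<in> span Y"
  proof
    assume "y \<in> span (X \<union> Y)"
    then obtain x z where xz: "x \<in> span X" "z \<in> span Y" "y = x + z"
      by (auto simp: span_Un)
    have "y \<in> span (insert y Y)" "z \<in> span (insert y Y)"
      using xz(2) span_mono[of Y "insert y Y"] by (auto intro: span_base)
    then have "x \<in> span (insert y Y)"
      using xz(3) span_diff by fastforce
    then have "x = 0" using xz(1) insert.prems by blast
    then show "y \<in> span Y" using xz by simp
  qed (use span_mono[of Y "X \<union> Y"] in blast)
  then show ?case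
    using IH assms(1) insert.hyps(1) by (simp add: dim_insert_of_finite)
qed

lemma dim_image_eq_of_inj:
  assumes "Vector_Spaces.linear s1 s2 f" and "inj f"
  shows "vector_space.dim s2 (f ` S) = vector_space.dim s1 S"
proof -
  interpret Vector_Spaces.linear s1 s2 f by fact
  obtain B where B: "B \<subseteq> S" "vs1.independent B" "S \<subseteq> vs1.span B" "card B = vs1.dim S"
    using vs1.basis_exists by blast
  have "card (f ` B) = vs2.dim (f ` S)"
  proof (rule vs2.basis_card_eq_dim)
    show "f ` B \<subseteq> f ` S" using B(1) by blast
    show "f ` S \<subseteq> vs2.span (f ` B)" using B(3) by (auto simp: span_image)
    show "vs2.independent (f ` B)"
      using B(2) assms(2) by (metis independent_injective_image inj_on_subset subset_UNIV)
  qed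
  then show ?thesis
    using B(4) assms(2) by (simp add: card_image inj_on_subset)
qed

section \<open>Coordinate subspaces and the matroid of a subspace\<close>

definition vanishing_on :: "'n set \<Rightarrow> ('a::zero^'n) set" where
  "vanishing_on A = {v. \<forall>a\<in>A. v $ a = 0}"

lemma subspace_vanishing_on: "vec.subspace (vanishing_on A :: ('a::field^'n) set)"
  unfolding vec.subspace_def vanishing_on_def by simp

lemma vanishing_on_empty [simp]: "vanishing_on {} = UNIV"
  by (simp add: vanishing_on_def)

lemma vanishing_on_UNIV [simp]: "vanishing_on UNIV = {0}"
  by (auto simp: vanishing_on_def Finite_Cartesian_Product.vec_eq_iff)

lemma inter_vanishing_on_insert:
  "W \<inter> vanishing_on (insert a A) = (W \<inter> vanishing_on A) \<inter> vanishing_on {a}"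
  by (auto simp: vanishing_on_def)

lemma subspace_inter_vanishing_on:
  "vec.subspace W \<Longrightarrow> vec.subspace (W \<inter> vanishing_on A)"
  using subspace_vanishing_on vec.subspace_inter by blast

lemma dim_inter_vanishing_on_singleton:
  fixes W :: "('a::field^'n) set"
  assumes W: "vec.subspace W"
  shows "vec.dim (W \<inter> vanishing_on {j}) + (if \<exists>w\<in>W. w $ j \<noteq> 0 then 1 else 0) = vec.dim W"
proof (cases "\<exists>w\<in>W. w $ j \<noteq> 0")
  case True
  then obtain w0 where w0: "w0 \<in> W" "w0 $ j \<noteq> 0" by blast
  let ?K = "W \<inter> vanishing_on {j}"
  have span: "vec.span (insert w0 ?K) = W"
  proof
    show "vec.span (insert w0 ?K) \<subseteq> W"
      using w0(1) W by (intro vec.span_minimal) auto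
    show "W \<subseteq> vec.span (insert w0 ?K)"
    proof
      fix w assume "w \<in> W"
      then have "w - (w $ j / w0 $ j) *s w0 \<in> ?K"
        using w0 W by (simp add: vanishing_on_def vec.subspace_diff vec.subspace_scale)
      then show "w \<in> vec.span (insert w0 ?K)"
        using vec.span_breakdown_eq vec.span_base by blast
    qed
  qed
  moreover have "vec.span ?K = ?K"
    using subspace_inter_vanishing_on[OF W] by (rule vec.span_eq_iff[THEN iffD2])
  moreover have "w0 \<notin> ?K"
    using w0(2) by (simp add: vanishing_on_def)
  ultimately have "w0 \<notin> vec.span ?K"
    by metis
  moreover have "vec.dim W = vec.dim (insert w0 ?K)"
    using vec.dim_span[of "insert w0 ?K"] by (simp only: span)
  ultimately have "vec.dim W = vec.dim ?K + 1"
    by (simp add: vec.dim_insert)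
  then show ?thesis using True by simp
next
  case False
  then have "W \<inter> vanishing_on {j} = W" by (auto simp: vanishing_on_def)
  then show ?thesis using False by simp
qed

lemma dim_le_dim_inter_vanishing_on_add_card:
  fixes W :: "('a::field^'n) set"
  assumes W: "vec.subspace W" and "finite T"
  shows "vec.dim W \<le> vec.dim (W \<inter> vanishing_on T) + card T"
  using assms(2)
proof (induction T rule: finite_induct)
  case empty
  show ?case by simp
next
  case (insert j T)
  have "vec.dim (W \<inter> vanishing_on T) \<le> vec.dim (W \<inter> vanishing_on (insert j T)) + 1"
    using dim_inter_vanishing_on_singleton[OF subspace_inter_vanishing_on[OF W], of T j]
    unfolding inter_vanishing_on_insert[of W j T] by (auto split: if_splits)
  then show ?case using insert by simp
qed

definition MV_rank :: "('a::field^'n) set \<Rightarrow> 'n set \<Rightarrow> nat" where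
  "MV_rank V U = vec.dim V - vec.dim (V \<inter> vanishing_on U)"

lemma MV_rank_UNIV [simp]: "MV_rank V UNIV = vec.dim V"
proof -
  have "vec.dim (V \<inter> vanishing_on UNIV) = 0" by simp
  then show ?thesis unfolding MV_rank_def by (simp only: diff_zero)
qed

lemma MV_basisD:
  assumes "MV_basis V B"
  shows "card B = vec.dim V" and "V \<inter> vanishing_on B \<subseteq> {0}"
proof -
  define k where "k = vec.dim V"
  obtain a e where span: "vec.span (a ` {..<k}) = V" and e: "bij_betw e {..<k} B"
    and det: "det_nat k (\<lambda>i j. a i $ e j) \<noteq> 0"
    using assms unfolding MV_basis_def Let_def k_def by blast
  show "card B = vec.dim V"
    using bij_betw_same_card[OF e] k_def by simp
  show "V \<inter> vanishing_on B \<subseteq> {0}"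
  proof
    fix v assume v: "v \<in> V \<inter> vanishing_on B"
    obtain c where c: "v = (\<Sum>i<k. c i *s a i)"
      using v span span_image_eq_range_sum[of "{..<k}" a] by auto
    have "(\<Sum>i<k. a i $ e j * c i) = v $ e j" for j
      unfolding c by (simp add: sum_component mult.commute)
    moreover have "v $ e j = 0" if "j < k" for j
      using v e that by (auto simp: vanishing_on_def bij_betw_def)
    ultimately have "\<forall>i<k. c i = 0"
      using det by (simp add: det_nat_neq_0_iff)
    then show "v \<in> {0}" unfolding c by simp
  qed
qed

lemma MV_basisI:
  assumes V: "vec.subspace V" and card: "card B = vec.dim V"
    and vanishing: "V \<inter> vanishing_on B \<subseteq> {0}"
  shows "MV_basis V B"
proof -
  define k where "k = vec.dim V"
  obtain \<beta> where \<beta>: "\<beta> \<subseteq> V" "vec.independent \<beta>" "V \<subseteq> vec.span \<beta>" "card \<beta> = k"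
    using vec.basis_exists unfolding k_def by blast
  have "finite \<beta>" using \<beta>(2) vec.finiteI_independent by blast
  then obtain a where a: "bij_betw a {..<k} \<beta>"
    using ex_bij_betw_nat_finite[OF \<open>finite \<beta>\<close>] \<beta>(4) by (auto simp: lessThan_atLeast0)
  obtain e where e: "bij_betw e {..<k} B"
    using ex_bij_betw_nat_finite[of B] card k_def by (auto simp: lessThan_atLeast0)
  have image_a: "a ` {..<k} = \<beta>" and inj_a: "inj_on a {..<k}"
    using a by (auto simp: bij_betw_def)
  have "vec.span (a ` {..<k}) = V"
    using image_a \<beta>(1,3) vec.span_minimal[OF \<beta>(1) V] by auto
  moreover have "det_nat k (\<lambda>i j. a i $ e j) \<noteq> 0"
    unfolding det_nat_neq_0_iff
  proof (rule allI, rule impI)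
    fix d assume d: "\<forall>j<k. (\<Sum>i<k. a i $ e j * d i) = 0"
    define v where "v = (\<Sum>i<k. d i *s a i)"
    have "v \<in> V"
      unfolding v_def using image_a \<beta>(1)
      by (intro vec.subspace_sum[OF V] vec.subspace_scale[OF V]) auto
    moreover have "v \<in> vanishing_on B"
    proof -
      have "v $ e j = 0" if "j < k" for j
        using d that by (simp add: v_def sum_component mult.commute)
      then show ?thesis
        using e by (auto simp: vanishing_on_def bij_betw_def)
    qed
    ultimately have "v = 0"
      using vanishing by blast
    define u where "u x = d (inv_into {..<k} a x)" for x
    have "(\<Sum>x\<in>\<beta>. u x *s x) = (\<Sum>i<k. u (a i) *s a i)"
      unfolding image_a[symmetric] by (rule sum.reindex[OF inj_a, unfolded comp_def])
    also have "\<dots> = v"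
      unfolding v_def u_def using inj_a by (intro sum.cong) auto
    finally have "(\<Sum>x\<in>\<beta>. u x *s x) = 0"
      using \<open>v = 0\<close> by simp
    then have "\<forall>x\<in>\<beta>. u x = 0"
      using \<beta>(2) vec.dependent_finite[OF \<open>finite \<beta>\<close>] by blast
    then show "\<forall>i<k. d i = 0"
      using image_a inj_a by (auto simp: u_def)
  qed
  ultimately show ?thesis
    using e unfolding MV_basis_def Let_def k_def[symmetric] by blast
qed

lemma card_inter_le_MV_rank:
  assumes V: "vec.subspace V" and B: "MV_basis V B"
  shows "card (B \<inter> U) \<le> MV_rank V U"
proof -
  let ?W = "V \<inter> vanishing_on U"
  have "vec.dim ?W \<le> vec.dim (?W \<inter> vanishing_on (B - U)) + card (B - U)"
    using dim_le_dim_inter_vanishing_on_add_card[OF subspace_inter_vanishing_on[OF V]] by simp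
  moreover have "?W \<inter> vanishing_on (B - U) \<subseteq> V \<inter> vanishing_on B"
    by (auto simp: vanishing_on_def)
  then have "?W \<inter> vanishing_on (B - U) \<subseteq> {0}"
    using MV_basisD(2)[OF B] by blast
  then have "vec.dim (?W \<inter> vanishing_on (B - U)) = 0"
    by simp
  moreover have "card (B - U) = card B - card (B \<inter> U)" "card (B \<inter> U) \<le> card B"
    by (simp_all add: card_Diff_subset_Int card_mono)
  ultimately show ?thesis
    using MV_basisD(1)[OF B] by (simp add: MV_rank_def)
qed

lemma column_in_span_iff:
  fixes R :: "'a::field^'n^'m"
  shows "column a R \<in> vec.span ((\<lambda>b. column b R) ` A) \<longleftrightarrow>
    (\<forall>v\<in>vec.span (rows R) \<inter> vanishing_on A. v $ a = 0)"
proof -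
  have row_comb: "(M *v column b R) $ s = (\<Sum>t\<in>UNIV. M $ s $ t *s row t R) $ b"
    for M :: "'a^'m^'m" and s b
    by (simp add: matrix_vector_mult_def sum_component column_def Finite_Cartesian_Product.row_def)
  show ?thesis
    unfolding in_span_iff_annihilated span_rows
  proof (rule iffI)
    assume annihilated: "\<forall>M::'a^'m^'m. (\<forall>y\<in>(\<lambda>b. column b R) ` A. M *v y = 0) \<longrightarrow> M *v column a R = 0"
    show "\<forall>v\<in>range (\<lambda>c. \<Sum>t\<in>UNIV. c t *s row t R) \<inter> vanishing_on A. v $ a = 0"
    proof
      fix v assume v: "v \<in> range (\<lambda>c. \<Sum>t\<in>UNIV. c t *s row t R) \<inter> vanishing_on A"
      then obtain c where c: "v = (\<Sum>t\<in>UNIV. c t *s row t R)"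
        by blast
      define M :: "'a^'m^'m" where "M = (\<chi> s t. c t)"
      have M_column: "(M *v column b R) $ s = v $ b" for b s
        by (simp add: row_comb c M_def)
      then have "M *v column b R = 0" if "b \<in> A" for b
        using v that by (simp add: Finite_Cartesian_Product.vec_eq_iff vanishing_on_def)
      then have "M *v column a R = 0"
        using annihilated by blast
      then show "v $ a = 0"
        using M_column[of a] by simp
    qed
  next
    assume vanishing: "\<forall>v\<in>range (\<lambda>c. \<Sum>t\<in>UNIV. c t *s row t R) \<inter> vanishing_on A. v $ a = 0"
    show "\<forall>M::'a^'m^'m. (\<forall>y\<in>(\<lambda>b. column b R) ` A. M *v y = 0) \<longrightarrow> M *v column a R = 0"
    proof (intro allI impI)
      fix M :: "'a^'m^'m"
      assume "\<forall>y\<in>(\<lambda>b. column b R) ` A. M *v y = 0"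
      then have "(\<Sum>t\<in>UNIV. M $ s $ t *s row t R) $ b = 0" if "b \<in> A" for s b
        unfolding row_comb[symmetric] using that by simp
      then have "(\<Sum>t\<in>UNIV. M $ s $ t *s row t R) \<in> vanishing_on A" for s
        by (simp add: vanishing_on_def)
      then have "(M *v column a R) $ s = 0" for s
        using vanishing unfolding row_comb by blast
      then show "M *v column a R = 0"
        by (simp add: Finite_Cartesian_Product.vec_eq_iff)
    qed
  qed
qed

lemma dim_columns_eq_MV_rank:
  fixes R :: "'a::field^'n^'m"
  assumes rows: "vec.span (rows R) = V"
  shows "vec.dim ((\<lambda>a. column a R) ` A) = MV_rank V A"
proof -
  have V: "vec.subspace V"
    using rows vec.subspace_span by blast
  have "finite A" by simp
  then have "vec.dim ((\<lambda>a. column a R) ` A) + vec.dim (V \<inter> vanishing_on A) = vec.dim V"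
  proof (induction A rule: finite_induct)
    case empty
    show ?case by simp
  next
    case (insert a A)
    let ?W = "V \<inter> vanishing_on A"
    have "column a R \<in> vec.span ((\<lambda>b. column b R) ` A) \<longleftrightarrow> \<not> (\<exists>w\<in>?W. w $ a \<noteq> 0)"
      using column_in_span_iff[of a R A] rows by blast
    then show ?case
      using insert.IH dim_inter_vanishing_on_singleton[OF subspace_inter_vanishing_on[OF V], of A a]
      unfolding inter_vanishing_on_insert[of V a A]
      by (simp add: vec.dim_insert split: if_splits)
  qed
  then show ?thesis
    unfolding MV_rank_def by linarith
qed

lemma ex_rows_span:
  fixes V :: "('a::field^'n) set"
  assumes V: "vec.subspace V"
  shows "\<exists>R::'a^'n^'n. vec.span (rows R) = V"
proof -
  obtain \<beta> where \<beta>: "\<beta> \<subseteq> V" "vec.independent \<beta>" "V \<subseteq> vec.span \<beta>" "card \<beta> = vec.dim V"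
    by (rule vec.basis_exists)
  have "finite \<beta>"
    using \<beta>(2) vec.finiteI_independent by blast
  moreover have "card \<beta> \<le> card (UNIV :: 'n set)"
    using \<beta>(4) dim_subset_UNIV_cart_gen[of V] by simp
  ultimately obtain g :: "'a^'n \<Rightarrow> 'n" where g: "inj_on g \<beta>"
    using card_le_inj[of \<beta> "UNIV :: 'n set"] by auto
  define R :: "'a^'n^'n" where "R = (\<chi> t. if t \<in> g ` \<beta> then the_inv_into \<beta> g t else 0)"
  have "rows R \<subseteq> insert 0 \<beta>"
    using the_inv_into_into[OF g]
    by (auto simp: Finite_Cartesian_Product.rows_def Finite_Cartesian_Product.row_def R_def)
  moreover have "\<beta> \<subseteq> rows R"
  proof
    fix b assume "b \<in> \<beta>"
    then have "row (g b) R = b"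
      using the_inv_into_f_f[OF g]
      by (simp add: Finite_Cartesian_Product.row_def R_def vec_lambda_eta)
    then show "b \<in> rows R"
      unfolding Finite_Cartesian_Product.rows_def by (intro CollectI exI[of _ "g b"]) simp
  qed
  ultimately have "vec.span (rows R) = vec.span \<beta>"
    using vec.span_mono[of "rows R" "insert 0 \<beta>"] vec.span_mono[of \<beta> "rows R"] by auto
  also have "\<dots> = V"
    using \<beta>(1,3) vec.span_minimal[OF \<beta>(1) V] by auto
  finally show ?thesis by blast
qed

section \<open>Greedy bases\<close>

lemma initial_segment_Suc_cases:
  assumes "inj f"
  obtains (same) "{t. f t < Suc j} = {t. f t < j}"
    | (insert) t where "f t = j" "{s. f s < Suc j} = insert t {s. f s < j}"
proof (cases "j \<in> range f")
  case True
  then obtain t where "f t = j" by blast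
  moreover have "{s. f s < Suc j} = insert t {s. f s < j}"
    using \<open>f t = j\<close> injD[OF assms] by (auto simp: less_Suc_eq)
  ultimately show ?thesis by (rule insert)
next
  case False
  then have "{t. f t < Suc j} = {t. f t < j}"
    by (auto simp: less_Suc_eq)
  then show ?thesis by (rule same)
qed

lemma initial_segment_eq_UNIV: "\<exists>m. {t::'n::finite. f t < (m::nat)} = UNIV"
  by (rule exI[of _ "Suc (Max (range f))"]) (auto simp: le_imp_less_Suc)

lemma ex_inj_initial_segment: "\<exists>(f::'n::finite \<Rightarrow> nat) m. inj f \<and> U = {t. f t < m}"
proof -
  obtain m where m: "{t::'n. to_nat t < m} = UNIV"
    using initial_segment_eq_UNIV by blast
  define f where "f t = (if t \<in> U then to_nat t else m + to_nat t)" for t :: 'n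
  have bound: "to_nat t < m" for t :: 'n
    using m by blast
  have "inj f"
  proof (rule injI)
    fix x y assume "f x = f y"
    then show "x = y"
      using bound[of x] bound[of y] by (auto simp: f_def split: if_splits)
  qed
  moreover have "U = {t. f t < m}"
    using bound by (auto simp: f_def)
  ultimately show ?thesis by blast
qed

definition greedy_basis :: "('n \<Rightarrow> nat) \<Rightarrow> ('a::field^'n) set \<Rightarrow> 'n set" where
  "greedy_basis f V = {t. \<exists>v\<in>V \<inter> vanishing_on {s. f s < f t}. v $ t \<noteq> 0}"

lemma greedy_basis_mono: "V \<subseteq> W \<Longrightarrow> greedy_basis f V \<subseteq> greedy_basis f W"
  unfolding greedy_basis_def by blast

lemma card_greedy_basis_inter_initial_segment:
  assumes V: "vec.subspace V" and f: "inj f"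
  shows "card (greedy_basis f V \<inter> {t. f t < j}) = MV_rank V {t. f t < j}"
proof -
  have "card (greedy_basis f V \<inter> {t. f t < j}) + vec.dim (V \<inter> vanishing_on {t. f t < j})
      = vec.dim V"
  proof (induction j)
    case 0
    show ?case by simp
  next
    case (Suc j)
    let ?S = "{t. f t < j}"
    show ?case
    proof (cases rule: initial_segment_Suc_cases[OF f, of j, case_names same insert])
      case same
      then show ?thesis using Suc.IH by simp
    next
      case (insert t)
      have "t \<in> greedy_basis f V \<longleftrightarrow> (\<exists>w\<in>V \<inter> vanishing_on ?S. w $ t \<noteq> 0)"
        using insert(1) by (simp add: greedy_basis_def)
      moreover have "t \<notin> ?S"
        using insert(1) by simp
      ultimately show ?thesis
        using Suc.IH dim_inter_vanishing_on_singleton[OF subspace_inter_vanishing_on[OF V], of ?S t]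
        unfolding insert(2) inter_vanishing_on_insert[of V t ?S]
        by (auto split: if_splits)
    qed
  qed
  then show ?thesis
    unfolding MV_rank_def by linarith
qed

lemma MV_basis_greedy_basis:
  fixes V :: "(complex^'n) set"
  assumes V: "vec.subspace V" and f: "inj f"
  shows "MV_basis V (greedy_basis f V)"
proof (rule MV_basisI[OF V])
  obtain m where "{t. f t < m} = UNIV"
    using initial_segment_eq_UNIV by blast
  then show "card (greedy_basis f V) = vec.dim V"
    using card_greedy_basis_inter_initial_segment[OF V f, of m] by simp
  show "V \<inter> vanishing_on (greedy_basis f V) \<subseteq> {0}"
  proof
    fix v assume v: "v \<in> V \<inter> vanishing_on (greedy_basis f V)"
    show "v \<in> {0}"
    proof (rule ccontr)
      assume "v \<notin> {0}"
      then obtain t0 where "v $ t0 \<noteq> 0"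
        by (auto simp: Finite_Cartesian_Product.vec_eq_iff)
      then obtain t where t: "v $ t \<noteq> 0" and "\<forall>s. v $ s \<noteq> 0 \<longrightarrow> f t \<le> f s"
        using ex_has_least_nat[of "\<lambda>t. v $ t \<noteq> 0" t0 f] by blast
      then have "v \<in> vanishing_on {s. f s < f t}"
        by (auto simp: vanishing_on_def not_le[symmetric])
      then have "t \<in> greedy_basis f V"
        using v t by (auto simp: greedy_basis_def)
      then show False
        using v t by (simp add: vanishing_on_def)
    qed
  qed
qed

section \<open>The flag polytope\<close>

definition flag_matroid_of :: "(complex^'n) set list \<Rightarrow> 'n set list set" where
  "flag_matroid_of Vs =
     {Bs. length Bs = length Vs \<and> (\<forall>i. Suc i < length Bs \<longrightarrow> Bs ! i \<subseteq> Bs ! Suc i) \<and>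
          (\<forall>i<length Bs. MV_basis (Vs ! i) (Bs ! i))}"

definition flag_rank :: "('a::field^'n) set list \<Rightarrow> 'n set \<Rightarrow> nat" where
  "flag_rank Vs U = (\<Sum>V\<leftarrow>Vs. MV_rank V U)"

lemma flag_rank_eq_sum_nth: "flag_rank Vs U = (\<Sum>i<length Vs. MV_rank (Vs ! i) U)"
  by (simp add: flag_rank_def sum_list_sum_nth atLeast0LessThan)

lemma inner_indic_vec: "x \<bullet> indic_vec T = (\<Sum>t\<in>T. x $ t)"
proof -
  have "x \<bullet> indic_vec T = (\<Sum>t\<in>UNIV. if t \<in> T then x $ t else 0)"
    unfolding inner_vec_def indic_vec_def by (intro sum.cong) auto
  then show ?thesis by (simp add: sum.If_cases)
qed

lemma inner_flag_vertex:
  "sum_list (map indic_vec F) \<bullet> indic_vec U = (\<Sum>i<length F. real (card (F ! i \<inter> U)))"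
proof -
  have "indic_vec B \<bullet> indic_vec U = real (card (B \<inter> U))" for B
    unfolding inner_indic_vec by (simp add: indic_vec_def sum.If_cases Int_commute)
  then have "sum_list (map indic_vec F) \<bullet> indic_vec U = (\<Sum>B\<leftarrow>F. real (card (B \<inter> U)))"
    by (induction F) (simp_all add: inner_add_left)
  then show ?thesis
    by (simp add: sum_list_sum_nth atLeast0LessThan)
qed

lemma flag_base_polytope_inner_le_flag_rank:
  assumes subspace: "\<forall>V\<in>set Vs. vec.subspace V"
    and y: "y \<in> flag_base_polytope (flag_matroid_of Vs)"
  shows "y \<bullet> indic_vec U \<le> real (flag_rank Vs U)"
proof -
  have "flag_base_polytope (flag_matroid_of Vs) \<subseteq> {y. indic_vec U \<bullet> y \<le> real (flag_rank Vs U)}"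
    unfolding flag_base_polytope_def
  proof (rule hull_minimal)
    show "convex {y. indic_vec U \<bullet> y \<le> real (flag_rank Vs U)}"
      by (rule convex_halfspace_le)
    show "{sum_list (map indic_vec F) |F. F \<in> flag_matroid_of Vs}
        \<subseteq> {y. indic_vec U \<bullet> y \<le> real (flag_rank Vs U)}"
    proof safe
      fix F assume F: "F \<in> flag_matroid_of Vs"
      have "sum_list (map indic_vec F) \<bullet> indic_vec U = (\<Sum>i<length Vs. real (card (F ! i \<inter> U)))"
        using F by (simp add: inner_flag_vertex flag_matroid_of_def)
      also have "\<dots> \<le> (\<Sum>i<length Vs. real (MV_rank (Vs ! i) U))"
        using F subspace
        by (intro sum_mono of_nat_mono card_inter_le_MV_rank) (auto simp: flag_matroid_of_def)
      also have "\<dots> = real (flag_rank Vs U)"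
        by (simp add: flag_rank_eq_sum_nth)
      finally show "indic_vec U \<bullet> sum_list (map indic_vec F) \<le> real (flag_rank Vs U)"
        by (simp add: inner_commute)
    qed
  qed
  then show ?thesis
    using y by (auto simp: inner_commute)
qed

lemma flag_rank_attained:
  fixes Vs :: "(complex^'n) set list"
  assumes subspace: "\<forall>V\<in>set Vs. vec.subspace V"
    and chain: "\<forall>i. Suc i < length Vs \<longrightarrow> Vs ! i \<subseteq> Vs ! Suc i"
  shows "\<exists>F\<in>flag_matroid_of Vs. sum_list (map indic_vec F) \<bullet> indic_vec U = real (flag_rank Vs U)"
proof -
  obtain f :: "'n \<Rightarrow> nat" and m where f: "inj f" and U: "U = {t. f t < m}"
    using ex_inj_initial_segment by blast
  define F where "F = map (greedy_basis f) Vs"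
  have "F \<in> flag_matroid_of Vs"
    unfolding flag_matroid_of_def
  proof (intro CollectI conjI allI impI)
    show "length F = length Vs"
      by (simp add: F_def)
  next
    fix i assume "Suc i < length F"
    then show "F ! i \<subseteq> F ! Suc i"
      using chain by (simp add: F_def greedy_basis_mono)
  next
    fix i assume "i < length F"
    then show "MV_basis (Vs ! i) (F ! i)"
      using subspace by (simp add: F_def MV_basis_greedy_basis[OF _ f])
  qed
  moreover have "sum_list (map indic_vec F) \<bullet> indic_vec U = real (flag_rank Vs U)"
  proof -
    have "card (F ! i \<inter> U) = MV_rank (Vs ! i) U" if "i < length Vs" for i
      using card_greedy_basis_inter_initial_segment[OF _ f, of "Vs ! i" m] subspace that
      by (simp add: F_def U)
    then show ?thesis
      unfolding inner_flag_vertex flag_rank_eq_sum_nth by (simp add: F_def)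
  qed
  ultimately show ?thesis by blast
qed

section \<open>The greedy vertex of a polymatroid\<close>

lemma polymatroidD:
  assumes "polymatroid r"
  shows "r {} = 0" and "A \<subseteq> B \<Longrightarrow> r A \<le> r B"
    and "r (A \<union> B) + r (A \<inter> B) \<le> r A + r B"
  using assms unfolding polymatroid_def by blast+

definition greedy_vector :: "('n::finite set \<Rightarrow> nat) \<Rightarrow> ('n \<Rightarrow> nat) \<Rightarrow> real^'n" where
  "greedy_vector r f = (\<chi> t. real (r {s. f s < Suc (f t)}) - real (r {s. f s < f t}))"

lemma sum_greedy_vector_initial_segment:
  assumes "r {} = 0" and f: "inj f"
  shows "(\<Sum>t\<in>{t. f t < j}. greedy_vector r f $ t) = real (r {t. f t < j})"
proof (induction j)
  case 0
  show ?case using assms(1) by simp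
next
  case (Suc j)
  show ?case
  proof (cases rule: initial_segment_Suc_cases[OF f, of j, case_names same insert])
    case same
    then show ?thesis using Suc.IH by simp
  next
    case (insert t)
    then show ?thesis using Suc.IH by (simp add: greedy_vector_def)
  qed
qed

lemma sum_greedy_vector_le:
  assumes r: "polymatroid r" and f: "inj f"
  shows "(\<Sum>t\<in>T \<inter> {t. f t < j}. greedy_vector r f $ t) \<le> real (r (T \<inter> {t. f t < j}))"
proof (induction j)
  case 0
  show ?case using polymatroidD(1)[OF r] by simp
next
  case (Suc j)
  let ?S = "{t. f t < j}"
  show ?case
  proof (cases rule: initial_segment_Suc_cases[OF f, of j, case_names same insert])
    case same
    then show ?thesis using Suc.IH by simp
  next
    case (insert t)
    show ?thesis
    proof (cases "t \<in> T")
      case False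
      then have "T \<inter> {s. f s < Suc j} = T \<inter> ?S"
        using insert(2) by auto
      then show ?thesis using Suc.IH by simp
    next
      case True
      have "(T \<inter> insert t ?S) \<union> ?S = insert t ?S" "(T \<inter> insert t ?S) \<inter> ?S = T \<inter> ?S"
        using True by auto
      then have "r (insert t ?S) + r (T \<inter> ?S) \<le> r (T \<inter> insert t ?S) + r ?S"
        using polymatroidD(3)[OF r, of "T \<inter> insert t ?S" ?S] by simp
      moreover have "t \<notin> ?S" "greedy_vector r f $ t = real (r (insert t ?S)) - real (r ?S)"
        using insert by (simp_all add: greedy_vector_def)
      ultimately show ?thesis
        using Suc.IH True unfolding insert(2) by (simp add: Int_insert_left)
    qed
  qed
qed

lemma greedy_vector_mem_base_polytope:
  assumes r: "polymatroid r" and f: "inj f"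
  shows "greedy_vector r f \<in> polymatroid_base_polytope r"
proof -
  obtain m where m: "{t. f t < m} = UNIV"
    using initial_segment_eq_UNIV by blast
  have "r {s. f s < f t} \<le> r {s. f s < Suc (f t)}" for t
    by (rule polymatroidD(2)[OF r]) auto
  then have "greedy_vector r f $ t \<ge> 0" for t
    by (simp add: greedy_vector_def)
  moreover have "greedy_vector r f \<bullet> indic_vec U \<le> real (r U)" for U
    using sum_greedy_vector_le[OF r f, of U m] by (simp add: m inner_indic_vec)
  moreover have "greedy_vector r f \<bullet> indic_vec UNIV = real (r UNIV)"
    using sum_greedy_vector_initial_segment[of r f m, OF polymatroidD(1)[OF r] f]
    by (simp add: m inner_indic_vec)
  ultimately show ?thesis
    by (simp add: polymatroid_base_polytope_def)
qed

lemma polymatroid_rank_attained: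
  fixes r :: "'n::finite set \<Rightarrow> nat"
  assumes r: "polymatroid r"
  shows "\<exists>x\<in>polymatroid_base_polytope r. x \<bullet> indic_vec U = real (r U)"
proof -
  obtain f :: "'n \<Rightarrow> nat" and m where f: "inj f" and U: "U = {t. f t < m}"
    using ex_inj_initial_segment by blast
  have "greedy_vector r f \<bullet> indic_vec U = real (r U)"
    using sum_greedy_vector_initial_segment[of r f m, OF polymatroidD(1)[OF r] f]
    by (simp add: U inner_indic_vec)
  then show ?thesis
    using greedy_vector_mem_base_polytope[OF r f] by blast
qed

lemma rank_eq_flag_rank:
  assumes r: "polymatroid r"
    and polytope: "polymatroid_base_polytope r = flag_base_polytope (flag_matroid_of Vs)"
    and subspace: "\<forall>V\<in>set Vs. vec.subspace V"
    and chain: "\<forall>i. Suc i < length Vs \<longrightarrow> Vs ! i \<subseteq> Vs ! Suc i"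
  shows "r U = flag_rank Vs U"
proof (rule antisym)
  obtain x where "x \<in> polymatroid_base_polytope r" "x \<bullet> indic_vec U = real (r U)"
    using polymatroid_rank_attained[OF r] by blast
  then show "r U \<le> flag_rank Vs U"
    using flag_base_polytope_inner_le_flag_rank[OF subspace, of x U] polytope by simp
next
  obtain F where F: "F \<in> flag_matroid_of Vs"
    and inner_F: "sum_list (map indic_vec F) \<bullet> indic_vec U = real (flag_rank Vs U)"
    using flag_rank_attained[OF subspace chain] by blast
  have "sum_list (map indic_vec F) \<in> polymatroid_base_polytope r"
    unfolding polytope flag_base_polytope_def using F by (blast intro: hull_inc)
  then have "sum_list (map indic_vec F) \<bullet> indic_vec U \<le> real (r U)"
    by (simp add: polymatroid_base_polytope_def)
  then show "flag_rank Vs U \<le> r U"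
    using inner_F by simp
qed

section \<open>Representable polymatroids\<close>

lemma span_UN_span:
  "fvec.span (\<Union>a\<in>A. fvec.span (S a)) = fvec.span (\<Union>a\<in>A. S a)"
proof
  have "(\<Union>a\<in>A. fvec.span (S a)) \<subseteq> fvec.span (\<Union>a\<in>A. S a)"
    using fvec.span_mono by (metis UN_least UN_upper)
  then show "fvec.span (\<Union>a\<in>A. fvec.span (S a)) \<subseteq> fvec.span (\<Union>a\<in>A. S a)"
    using fvec.span_minimal fvec.subspace_span by blast
  show "fvec.span (\<Union>a\<in>A. S a) \<subseteq> fvec.span (\<Union>a\<in>A. fvec.span (S a))"
    using fvec.span_superset by (intro fvec.span_mono) blast
qed

lemma representable_polymatroid_iff_generators:
  "representable_polymatroid r \<longleftrightarrow>
     (\<exists>S. (\<forall>a. finite (S a)) \<and> (\<forall>A. r A = fvec.dim (\<Union>a\<in>A. S a)))"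
proof
  assume "representable_polymatroid r"
  then obtain \<phi> where \<phi>: "\<forall>a. \<exists>S. finite S \<and> \<phi> a = fvec.span S"
    and r: "\<forall>A. r A = fvec.dim (fvec.span (\<Union>a\<in>A. \<phi> a))"
    unfolding representable_polymatroid_def by blast
  obtain S where S: "\<forall>a. finite (S a) \<and> \<phi> a = fvec.span (S a)"
    using choice[OF \<phi>] by blast
  then have "\<phi> = (\<lambda>a. fvec.span (S a))"
    by auto
  then have "r A = fvec.dim (\<Union>a\<in>A. S a)" for A
    using r by (simp add: span_UN_span)
  then show "\<exists>S. (\<forall>a. finite (S a)) \<and> (\<forall>A. r A = fvec.dim (\<Union>a\<in>A. S a))"
    using S by blast
next
  assume "\<exists>S. (\<forall>a. finite (S a)) \<and> (\<forall>A. r A = fvec.dim (\<Union>a\<in>A. S a))"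
  then obtain S where S: "\<forall>a. finite (S a)" and r: "\<forall>A. r A = fvec.dim (\<Union>a\<in>A. S a)"
    by blast
  show "representable_polymatroid r"
    unfolding representable_polymatroid_def
  proof (intro exI[of _ "\<lambda>a. fvec.span (S a)"] conjI allI)
    show "fvec.subspace (fvec.span (S a))" "\<exists>T. finite T \<and> fvec.span (S a) = fvec.span T" for a
      using S fvec.subspace_span by blast+
    show "r A = fvec.dim (fvec.span (\<Union>a\<in>A. fvec.span (S a)))" for A
      using r by (simp add: span_UN_span)
  qed
qed

lemma representable_polymatroid_zero: "representable_polymatroid 0"
  unfolding representable_polymatroid_iff_generators
  by (rule exI[of _ "\<lambda>_. {}"]) (simp add: fvec.dim_eq_card_independent[OF fvec.independent_empty])

definition interleave :: "(nat \<Rightarrow> complex) \<Rightarrow> (nat \<Rightarrow> complex) \<Rightarrow> nat \<Rightarrow> complex" where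
  "interleave f g m = (if even m then f (m div 2) else g (m div 2))"

lemma linear_interleave:
  "Vector_Spaces.linear fscale fscale (\<lambda>f. interleave f 0)"
  "Vector_Spaces.linear fscale fscale (interleave 0)"
  unfolding Vector_Spaces.linear_iff
  by (auto simp: interleave_def fscale_def fun_eq_iff fvec.vector_space_axioms)

lemma inj_interleave_left: "inj (\<lambda>f. interleave f g)"
proof (rule injI)
  fix f f' :: "nat \<Rightarrow> complex"
  assume "interleave f g = interleave f' g"
  then have "interleave f g (2 * k) = interleave f' g (2 * k)" for k
    by simp
  then show "f = f'"
    by (simp add: interleave_def fun_eq_iff)
qed

lemma inj_interleave_right: "inj (interleave f)"
proof (rule injI)
  fix g g' :: "nat \<Rightarrow> complex"
  assume "interleave f g = interleave f g'"
  then have "interleave f g (Suc (2 * k)) = interleave f g' (Suc (2 * k))" for k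
    by simp
  then show "g = g'"
    by (simp add: interleave_def fun_eq_iff)
qed

lemma representable_polymatroid_add:
  assumes "representable_polymatroid r1" and "representable_polymatroid r2"
  shows "representable_polymatroid (r1 + r2)"
proof -
  obtain S1 where S1: "\<forall>a. finite (S1 a)" "\<forall>A. r1 A = fvec.dim (\<Union>a\<in>A. S1 a)"
    using assms(1) unfolding representable_polymatroid_iff_generators by blast
  obtain S2 where S2: "\<forall>a. finite (S2 a)" "\<forall>A. r2 A = fvec.dim (\<Union>a\<in>A. S2 a)"
    using assms(2) unfolding representable_polymatroid_iff_generators by blast
  let ?L = "\<lambda>f. interleave f 0" and ?R = "interleave 0"
  have "(r1 + r2) A = fvec.dim (\<Union>a\<in>A. ?L ` S1 a \<union> ?R ` S2 a)" for A
  proof -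
    let ?X = "\<Union>a\<in>A. S1 a" and ?Y = "\<Union>a\<in>A. S2 a"
    have "fvec.span (?L ` ?X) \<subseteq> {h. \<forall>m. odd m \<longrightarrow> h m = 0}"
      by (rule fvec.span_minimal) (auto simp: interleave_def fvec.subspace_def fscale_def)
    moreover have "fvec.span (?R ` ?Y) \<subseteq> {h. \<forall>m. even m \<longrightarrow> h m = 0}"
      by (rule fvec.span_minimal) (auto simp: interleave_def fvec.subspace_def fscale_def)
    ultimately have "fvec.span (?L ` ?X) \<inter> fvec.span (?R ` ?Y)
        \<subseteq> {h. \<forall>m. odd m \<longrightarrow> h m = 0} \<inter> {h. \<forall>m. even m \<longrightarrow> h m = 0}"
      by blast
    also have "\<dots> \<subseteq> {0}"
    proof
      fix h assume "h \<in> {h. \<forall>m. odd m \<longrightarrow> h m = 0} \<inter> {h. \<forall>m. even m \<longrightarrow> h m = 0}"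
      then have "h m = 0" for m
        by (cases "even m") auto
      then show "h \<in> {0}"
        by (simp add: fun_eq_iff)
    qed
    finally have "fvec.span (?L ` ?X) \<inter> fvec.span (?R ` ?Y) \<subseteq> {0}" .
    then have "fvec.dim (?L ` ?X \<union> ?R ` ?Y) = fvec.dim (?L ` ?X) + fvec.dim (?R ` ?Y)"
      using S1(1) S2(1) by (intro fvec.dim_Un_eq_add) auto
    also have "\<dots> = r1 A + r2 A"
      using S1(2) S2(2)
        dim_image_eq_of_inj[OF linear_interleave(1) inj_interleave_left, of ?X]
        dim_image_eq_of_inj[OF linear_interleave(2) inj_interleave_right, of ?Y]
      by simp
    also have "?L ` ?X \<union> ?R ` ?Y = (\<Union>a\<in>A. ?L ` S1 a \<union> ?R ` S2 a)"
      by blast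
    finally show ?thesis
      by simp
  qed
  then show ?thesis
    unfolding representable_polymatroid_iff_generators
    using S1(1) S2(1) by (intro exI[of _ "\<lambda>a. ?L ` S1 a \<union> ?R ` S2 a"]) auto
qed

definition embed_vec :: "complex^'n \<Rightarrow> nat \<Rightarrow> complex" where
  "embed_vec v m = (if m \<in> range (to_nat :: 'n \<Rightarrow> nat) then v $ from_nat m else 0)"

lemma linear_embed_vec: "Vector_Spaces.linear (*s) fscale embed_vec"
  unfolding Vector_Spaces.linear_iff
  by (auto simp: embed_vec_def fscale_def fun_eq_iff vec.vector_space_axioms fvec.vector_space_axioms)

lemma inj_embed_vec: "inj embed_vec"
proof (rule injI)
  fix v w :: "complex^'n"
  assume "embed_vec v = embed_vec w"
  moreover have "embed_vec u (to_nat t) = u $ t" for u :: "complex^'n" and t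
    by (simp add: embed_vec_def rangeI)
  ultimately show "v = w"
    by (metis Finite_Cartesian_Product.vec_eq_iff)
qed

lemma representable_MV_rank:
  fixes V :: "(complex^'n) set"
  assumes V: "vec.subspace V"
  shows "representable_polymatroid (MV_rank V)"
proof -
  obtain R :: "complex^'n^'n" where R: "vec.span (rows R) = V"
    using ex_rows_span[OF V] by blast
  have "MV_rank V A = fvec.dim (\<Union>a\<in>A. {embed_vec (column a R)})" for A
  proof -
    have "(\<Union>a\<in>A. {embed_vec (column a R)}) = embed_vec ` (\<lambda>a. column a R) ` A"
      by blast
    also have "fvec.dim \<dots> = vec.dim ((\<lambda>a. column a R) ` A)"
      by (rule dim_image_eq_of_inj[OF linear_embed_vec inj_embed_vec])
    finally show ?thesis
      using dim_columns_eq_MV_rank[OF R, of A] by simp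
  qed
  then show ?thesis
    unfolding representable_polymatroid_iff_generators
    by (intro exI[of _ "\<lambda>a. {embed_vec (column a R)}"]) auto
qed

lemma representable_flag_rank:
  fixes Vs :: "(complex^'n) set list"
  assumes "\<forall>V\<in>set Vs. vec.subspace V"
  shows "representable_polymatroid (flag_rank Vs)"
  using assms
proof (induction Vs)
  case Nil
  have "flag_rank ([] :: (complex^'n) set list) = 0"
    by (simp add: fun_eq_iff flag_rank_def)
  then show ?case
    using representable_polymatroid_zero by (simp only:)
next
  case (Cons V Vs)
  have "flag_rank (V # Vs) = MV_rank V + flag_rank Vs"
    by (simp add: fun_eq_iff flag_rank_def)
  moreover have "representable_polymatroid (MV_rank V)"
    using Cons.prems by (simp add: representable_MV_rank)
  moreover have "representable_polymatroid (flag_rank Vs)"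
    using Cons by simp
  ultimately show ?case
    using representable_polymatroid_add by (simp only:)
qed

theorem proposition7p5:
  fixes ks :: "nat list" and FF :: "('n::finite set list) set" and r :: "'n set \<Rightarrow> nat"
  assumes "representable_flag_matroid ks FF"
    and "polymatroid r"
    and "polymatroid_base_polytope r = flag_base_polytope FF"
  shows "representable_polymatroid r"
proof -
  obtain Vs :: "(complex^'n) set list" where
    len: "length Vs = length ks" and
    nth_Vs: "\<forall>i<length Vs. vec.subspace (Vs ! i) \<and> vec.dim (Vs ! i) = ks ! i \<and> Vs ! i \<noteq> UNIV" and
    chain: "\<forall>i. Suc i < length Vs \<longrightarrow> Vs ! i \<subseteq> Vs ! Suc i" and
    FF: "FF = {Bs. length Bs = length ks \<and> (\<forall>i. Suc i < length Bs \<longrightarrow> Bs ! i \<subseteq> Bs ! Suc i) \<and>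
                  (\<forall>i<length Bs. MV_basis (Vs ! i) (Bs ! i))}"
    using assms(1) unfolding representable_flag_matroid_def by blast
  have "FF = flag_matroid_of Vs"
    using FF len by (simp add: flag_matroid_of_def)
  moreover have subspaces: "\<forall>V\<in>set Vs. vec.subspace V"
    using nth_Vs by (auto simp: in_set_conv_nth)
  ultimately have "r = flag_rank Vs"
    using rank_eq_flag_rank[OF assms(2) _ subspaces chain] assms(3) by (simp add: fun_eq_iff)
  then show ?thesis
    using representable_flag_rank[OF subspaces] by simp
qed

end
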